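(* Let $n\ge 3$ be an integer, let $R=\mathbb{C}[x,y,z,w]$, and let $I_n\subseteq R$ be the ideal generated by $$(x^n-y^n)(z^n-w^n)xy,\ (x^n-y^n)(z^n-w^n)zw,\ (x^n-z^n)(y^n-w^n)xz,\ (x^n-z^n)(y^n-w^n)yw,\ (x^n-w^n)(y^n-z^n)xw,\ (x^n-w^n)(y^n-z^n)yz.$$ Then $4n+2\le \alpha(I_n^{(2)})\le 4n+4$.
   Context: For a homogeneous ideal $I$, $\alpha(I)$ denotes the least degree of a nonzero homogeneous element of $I$. The $m$-th symbolic power is $I^{(m)}=\bigcap_{\mathfrak p\in \operatorname{Ass}(R/I)} (I^mR_{\mathfrak p}\cap R)$. *)

theory Defs
  imports Complex_Main "HOL-Library.Poly_Mapping" "HOL-Library.Numeral_Type"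
begin

definition is_ideal :: "'a::comm_ring_1 set \<Rightarrow> bool" where
  "is_ideal I \<longleftrightarrow> 0 \<in> I \<and> (\<forall>a\<in>I. \<forall>b\<in>I. a + b \<in> I) \<and> (\<forall>r. \<forall>a\<in>I. r * a \<in> I)"

definition ideal_gen :: "'a::comm_ring_1 set \<Rightarrow> 'a set" where
  "ideal_gen S = \<Inter>{I. is_ideal I \<and> S \<subseteq> I}"

definition ideal_pow :: "'a::comm_ring_1 set \<Rightarrow> nat \<Rightarrow> 'a set" where
  "ideal_pow I m = ideal_gen {prod_list xs | xs. length xs = m \<and> set xs \<subseteq> I}"

definition prime_ideal :: "'a::comm_ring_1 set \<Rightarrow> bool" where
  "prime_ideal P \<longleftrightarrow> is_ideal P \<and> 1 \<notin> P \<and> (\<forall>a b. a * b \<in> P \<longrightarrow> a \<in> P \<or> b \<in> P)"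

definition ass_primes :: "'a::comm_ring_1 set \<Rightarrow> 'a set set" where
  "ass_primes I = {P. prime_ideal P \<and> (\<exists>g. P = {r. r * g \<in> I})}"

text \<open>Symbolic power: intersection over associated primes P of the contraction
  I^m R_P \<inter> R = {f. \<exists>s \<notin> P. s f \<in> I^m}.\<close>
definition symbolic_power :: "'a::comm_ring_1 set \<Rightarrow> nat \<Rightarrow> 'a set" where
  "symbolic_power I m = {f. \<forall>P \<in> ass_primes I. \<exists>s. s \<notin> P \<and> s * f \<in> ideal_pow I m}"

text \<open>Polynomial ring C[x,y,z,w]: variables indexed by the 4-element type.\<close>
type_synonym mpoly4 = "(4 \<Rightarrow>\<^sub>0 nat) \<Rightarrow>\<^sub>0 complex"

definition Var :: "4 \<Rightarrow> mpoly4" where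
  "Var i = Poly_Mapping.single (Poly_Mapping.single i 1) 1"

definition homogeneous :: "nat \<Rightarrow> mpoly4 \<Rightarrow> bool" where
  "homogeneous d f \<longleftrightarrow> (\<forall>a \<in> Poly_Mapping.keys f. (\<Sum>i\<in>UNIV. Poly_Mapping.lookup a i) = d)"

definition alpha :: "mpoly4 set \<Rightarrow> nat" where
  "alpha I = (LEAST d. \<exists>f \<in> I. f \<noteq> 0 \<and> homogeneous d f)"

end

theory Submission
  imports Defs "HOL-Computational_Algebra.Polynomial" "HOL-Combinatorics.Transposition"
begin

text \<open>
  The upper bound is witnessed by the square of a generator. For the lower bound let f be a
  nonzero form of degree d \<le> 4n + 1 in the second symbolic power of I.
  The lines {x = y = 0}, {x = \<epsilon>y, w = \<eta>y} and {x = \<epsilon>y, z = \<eta>y}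
  (\<epsilon>^n = \<eta>^n = 1) are associated primes of I, so f vanishes to order two along
  each of them. These 2n + 1 lines lie in the plane x = \<epsilon>y; restricted to that plane, f becomes
  a polynomial in y over \<complex>[z,w] of degree at most 4n + 1 with 2n + 1 double roots, hence f
  vanishes on the plane. Permutations of the variables preserve I, so f vanishes on the 5n planes
  x_i = \<epsilon>x_j with (i,j) among (x,y), (x,z), (x,w), (z,y), (w,y). A generic line meets
  these planes in 5n distinct points, more than the degree of f once n \<ge> 2.
\<close>

section \<open>Ideals in commutative rings\<close>

lemma is_ideal_ideal_gen: "is_ideal (ideal_gen S)"
  unfolding ideal_gen_def is_ideal_def by auto

lemma ideal_gen_superset: "S \<subseteq> ideal_gen S"
  unfolding ideal_gen_def by auto

lemma ideal_gen_minimal: "is_ideal J \<Longrightarrow> S \<subseteq> J \<Longrightarrow> ideal_gen S \<subseteq> J"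
  unfolding ideal_gen_def by auto

lemma ideal_zero: "is_ideal I \<Longrightarrow> 0 \<in> I"
  unfolding is_ideal_def by auto

lemma ideal_add: "is_ideal I \<Longrightarrow> a \<in> I \<Longrightarrow> b \<in> I \<Longrightarrow> a + b \<in> I"
  unfolding is_ideal_def by auto

lemma ideal_mult_left: "is_ideal I \<Longrightarrow> a \<in> I \<Longrightarrow> r * a \<in> I"
  unfolding is_ideal_def by auto

lemma ideal_mult_right: "is_ideal I \<Longrightarrow> a \<in> I \<Longrightarrow> a * r \<in> I"
  unfolding is_ideal_def by (metis mult.commute)

lemma is_ideal_colon: "is_ideal I \<Longrightarrow> is_ideal {r. r * g \<in> I}"
  unfolding is_ideal_def by (auto simp: distrib_right mult.assoc)

lemma is_ideal_multiples: "is_ideal {p. a dvd p}"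
  unfolding is_ideal_def by (simp add: dvd_add)

lemma is_ideal_ideal_pow: "is_ideal (ideal_pow I m)"
  unfolding ideal_pow_def by (rule is_ideal_ideal_gen)

lemma prod_list_mem_ideal_pow: "length xs = m \<Longrightarrow> set xs \<subseteq> I \<Longrightarrow> prod_list xs \<in> ideal_pow I m"
  unfolding ideal_pow_def by (rule subsetD[OF ideal_gen_superset]) blast

lemma ideal_pow_subset_symbolic_power: "ideal_pow I m \<subseteq> symbolic_power I m"
  unfolding symbolic_power_def
proof safe
  fix f P assume "f \<in> ideal_pow I m" "P \<in> ass_primes I"
  then show "\<exists>s. s \<notin> P \<and> s * f \<in> ideal_pow I m"
    by (intro exI[of _ 1]) (simp add: ass_primes_def prime_ideal_def)
qed

lemma symbolic_powerE:
  assumes "f \<in> symbolic_power I m" "P \<in> ass_primes I"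
  obtains s where "s \<notin> P" "s * f \<in> ideal_pow I m"
proof -
  have "\<forall>P \<in> ass_primes I. \<exists>s. s \<notin> P \<and> s * f \<in> ideal_pow I m"
    using assms(1) by (simp add: symbolic_power_def)
  then show thesis
    using assms(2) that by blast
qed

lemma power_dvd_prod_list:
  fixes a :: "'a::comm_monoid_mult"
  shows "(\<And>y. y \<in> set ys \<Longrightarrow> a dvd y) \<Longrightarrow> a ^ length ys dvd prod_list ys"
  by (induction ys) (auto intro!: mult_dvd_mono)

locale ring_hom =
  fixes h :: "'a::comm_ring_1 \<Rightarrow> 'b::comm_ring_1"
  assumes hom_add: "h (a + b) = h a + h b"
    and hom_mult: "h (a * b) = h a * h b"
    and hom_one [simp]: "h 1 = 1"
begin

lemma hom_zero [simp]: "h 0 = 0"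
  using hom_add[of 0 0] by simp

lemma hom_uminus: "h (- a) = - h a"
  by (metis hom_add hom_zero add.right_inverse minus_unique)

lemma hom_diff: "h (a - b) = h a - h b"
  using hom_add[of a "- b"] by (simp add: hom_uminus)

lemma hom_power: "h (a ^ k) = h a ^ k"
  by (induction k) (simp_all add: hom_mult)

lemma hom_sum: "h (sum g A) = (\<Sum>x\<in>A. h (g x))"
  by (induction A rule: infinite_finite_induct) (simp_all add: hom_add)

lemma hom_prod_list: "h (prod_list xs) = prod_list (map h xs)"
  by (induction xs) (simp_all add: hom_mult)

lemma is_ideal_vimage: "is_ideal J \<Longrightarrow> is_ideal (h -` J)"
  unfolding is_ideal_def by (simp add: hom_add hom_mult)

lemma image_ideal_gen_subset: "is_ideal J \<Longrightarrow> h ` S \<subseteq> J \<Longrightarrow> h ` ideal_gen S \<subseteq> J"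
  using ideal_gen_minimal[of "h -` J" S] is_ideal_vimage by blast

lemma hom_eq_0_on_ideal_gen: "(\<And>G. G \<in> S \<Longrightarrow> h G = 0) \<Longrightarrow> p \<in> ideal_gen S \<Longrightarrow> h p = 0"
  using image_ideal_gen_subset[of "{0}" S] by (auto simp: is_ideal_def)

lemma image_ideal_pow_subset:
  assumes "is_ideal J" "h ` I \<subseteq> K"
    and "\<And>ys. length ys = m \<Longrightarrow> set ys \<subseteq> K \<Longrightarrow> prod_list ys \<in> J"
  shows "h ` ideal_pow I m \<subseteq> J"
proof -
  have "h (prod_list xs) \<in> J" if "length xs = m" "set xs \<subseteq> I" for xs
    using assms(3)[of "map h xs"] assms(2) that by (auto simp: hom_prod_list)
  then show ?thesis
    unfolding ideal_pow_def by (intro image_ideal_gen_subset[OF assms(1)]) blast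
qed

end

lemma symbolic_power_involution_closed:
  assumes "ring_hom h" and inv: "\<And>x. h (h x) = x" and hI: "h ` I \<subseteq> I"
    and f: "f \<in> symbolic_power I m"
  shows "h f \<in> symbolic_power I m"
proof -
  interpret ring_hom h by (rule assms(1))
  have pow: "h ` ideal_pow I m \<subseteq> ideal_pow I m"
    by (rule image_ideal_pow_subset[OF is_ideal_ideal_pow hI prod_list_mem_ideal_pow])
  show ?thesis
    unfolding symbolic_power_def
  proof safe
    fix P assume "P \<in> ass_primes I"
    then obtain g where P: "prime_ideal P" "P = {r. r * g \<in> I}"
      unfolding ass_primes_def by blast
    have colon: "r * h g \<in> I \<longleftrightarrow> h r \<in> P" for r
    proof
      assume "r * h g \<in> I"
      then have "h (r * h g) \<in> I" using hI by blast
      then show "h r \<in> P" using P(2) inv by (simp add: hom_mult)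
    next
      assume "h r \<in> P"
      then have "h (h r * g) \<in> I" using hI P(2) by blast
      then show "r * h g \<in> I" using inv by (simp add: hom_mult)
    qed
    have "prime_ideal (h -` P)"
      using P(1) is_ideal_vimage unfolding prime_ideal_def by (auto simp: hom_mult)
    moreover have "h -` P = {r. r * h g \<in> I}"
      using colon by auto
    ultimately have "h -` P \<in> ass_primes I"
      unfolding ass_primes_def by blast
    then obtain s where "h s \<notin> P" "s * f \<in> ideal_pow I m"
      using symbolic_powerE[OF f] by blast
    then show "\<exists>s. s \<notin> P \<and> s * h f \<in> ideal_pow I m"
      using pow by (metis hom_mult image_subset_iff)
  qed
qed

section \<open>Evaluation of polynomials in four variables\<close>

definition Const :: "complex \<Rightarrow> mpoly4" where
  "Const c = Poly_Mapping.single 0 c"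

lemma Const_add: "Const (a + b) = Const a + Const b"
  by (simp add: Const_def single_add)

lemma Const_mult: "Const (a * b) = Const a * Const b"
  by (simp add: Const_def mult_single)

lemma Const_0 [simp]: "Const 0 = 0"
  by (simp add: Const_def)

lemma Const_1 [simp]: "Const 1 = 1"
  by (simp add: Const_def)

definition monomial_value :: "(4 \<Rightarrow> 'b::comm_ring_1) \<Rightarrow> (4 \<Rightarrow>\<^sub>0 nat) \<Rightarrow> 'b" where
  "monomial_value \<sigma> m = (\<Prod>i\<in>UNIV. \<sigma> i ^ Poly_Mapping.lookup m i)"

text \<open>
  The map \<kappa> acts on the coefficients: \<kappa> = Const gives substitution of polynomials for the
  variables, \<kappa> = id evaluation at a complex point, and \<kappa> = PConst (below) evaluation at
  polynomials in one further variable t.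
\<close>
definition peval :: "(complex \<Rightarrow> 'b::comm_ring_1) \<Rightarrow> (4 \<Rightarrow> 'b) \<Rightarrow> mpoly4 \<Rightarrow> 'b" where
  "peval \<kappa> \<sigma> f =
    (\<Sum>m\<in>Poly_Mapping.keys f. \<kappa> (Poly_Mapping.lookup f m) * monomial_value \<sigma> m)"

abbreviation psubst :: "(4 \<Rightarrow> mpoly4) \<Rightarrow> mpoly4 \<Rightarrow> mpoly4" where
  "psubst \<equiv> peval Const"

lemma monomial_value_add: "monomial_value \<sigma> (m + m') = monomial_value \<sigma> m * monomial_value \<sigma> m'"
  by (simp add: monomial_value_def lookup_add power_add prod.distrib)

lemma monomial_value_0 [simp]: "monomial_value \<sigma> 0 = 1"
  by (simp add: monomial_value_def)

lemma peval_0 [simp]: "peval \<kappa> \<sigma> 0 = 0"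
  by (simp add: peval_def)

lemma sum_single_lookup:
  "(\<Sum>m\<in>Poly_Mapping.keys f. Poly_Mapping.single m (Poly_Mapping.lookup f m)) = f"
  by (rule poly_mapping_eqI) (auto simp: lookup_sum lookup_single when_def in_keys_iff)

lemma Var_power: "Var i ^ e = Poly_Mapping.single (Poly_Mapping.single i e) 1"
proof (induction e)
  case (Suc e)
  have "Var i ^ Suc e = Var i * Var i ^ e"
    by simp
  also have "\<dots> = Poly_Mapping.single (Poly_Mapping.single i 1 + Poly_Mapping.single i e) 1"
    unfolding Suc.IH by (simp add: Var_def mult_single)
  finally show ?case
    by (simp add: single_add[symmetric])
qed simp

lemma single_eq_Const_mult_monomial_value:
  "Poly_Mapping.single m c = Const c * monomial_value Var m"
proof -
  have "monomial_value Var m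
      = (\<Prod>i\<in>UNIV. Poly_Mapping.single (Poly_Mapping.single i (Poly_Mapping.lookup m i)) 1 :: mpoly4)"
    by (simp add: monomial_value_def Var_power)
  also have "\<dots> = Poly_Mapping.single (\<Sum>i\<in>UNIV. Poly_Mapping.single i (Poly_Mapping.lookup m i)) 1"
    by (induction rule: infinite_finite_induct) (simp_all add: mult_single)
  also have "(\<Sum>i\<in>UNIV. Poly_Mapping.single i (Poly_Mapping.lookup m i)) = m"
    by (rule poly_mapping_eqI) (simp add: lookup_sum lookup_single when_def)
  finally show ?thesis by (simp add: Const_def mult_single)
qed

lemma mpoly4_induct [case_names Const Var add mult]:
  assumes Const: "\<And>c. P (Const c)" and Var: "\<And>i. P (Var i)"
    and add: "\<And>a b. P a \<Longrightarrow> P b \<Longrightarrow> P (a + b)" and mult: "\<And>a b. P a \<Longrightarrow> P b \<Longrightarrow> P (a * b)"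
  shows "P f"
proof -
  have power: "P (a ^ k)" if "P a" for a k
    using that Const[of 1] by (induction k) (simp_all add: mult)
  have prod: "P (\<Prod>i\<in>A. g i)" if "\<And>i. P (g i)" for A :: "4 set" and g
    using that Const[of 1] by (induction A rule: infinite_finite_induct) (simp_all add: mult)
  have sum: "P (\<Sum>i\<in>A. g i)" if "\<And>i. i \<in> A \<Longrightarrow> P (g i)" for A :: "(4 \<Rightarrow>\<^sub>0 nat) set" and g
    using that Const[of 0] by (induction A rule: infinite_finite_induct) (simp_all add: add)
  have "P (\<Sum>m\<in>Poly_Mapping.keys f. Const (Poly_Mapping.lookup f m) * monomial_value Var m)"
    unfolding monomial_value_def by (intro sum mult Const prod power Var)
  then show ?thesis
    by (simp add: single_eq_Const_mult_monomial_value[symmetric] sum_single_lookup)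
qed

locale complex_hom = ring_hom \<kappa> for \<kappa> :: "complex \<Rightarrow> 'b::comm_ring_1"
begin

lemma peval_eq_sum_superset:
  assumes "finite S" "Poly_Mapping.keys f \<subseteq> S"
  shows "peval \<kappa> \<sigma> f = (\<Sum>m\<in>S. \<kappa> (Poly_Mapping.lookup f m) * monomial_value \<sigma> m)"
  unfolding peval_def by (rule sum.mono_neutral_left) (use assms in \<open>auto simp: in_keys_iff\<close>)

lemma peval_add: "peval \<kappa> \<sigma> (f + g) = peval \<kappa> \<sigma> f + peval \<kappa> \<sigma> g"
proof -
  let ?S = "Poly_Mapping.keys f \<union> Poly_Mapping.keys g"
  have "peval \<kappa> \<sigma> (f + g) = (\<Sum>m\<in>?S. \<kappa> (Poly_Mapping.lookup (f + g) m) * monomial_value \<sigma> m)"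
    using keys_add[of f g] by (intro peval_eq_sum_superset) auto
  also have "\<dots> = peval \<kappa> \<sigma> f + peval \<kappa> \<sigma> g"
    by (simp add: peval_eq_sum_superset[of ?S f] peval_eq_sum_superset[of ?S g]
        lookup_add hom_add distrib_right sum.distrib)
  finally show ?thesis .
qed

lemma peval_single: "peval \<kappa> \<sigma> (Poly_Mapping.single m c) = \<kappa> c * monomial_value \<sigma> m"
  by (cases "c = 0") (simp_all add: peval_def)

lemma peval_mult: "peval \<kappa> \<sigma> (f * g) = peval \<kappa> \<sigma> f * peval \<kappa> \<sigma> g"
proof -
  have sum: "peval \<kappa> \<sigma> (sum F A) = (\<Sum>a\<in>A. peval \<kappa> \<sigma> (F a))" for F and A :: "'c set"
    by (induction A rule: infinite_finite_induct) (simp_all add: peval_add)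
  have "f * g = (\<Sum>m\<in>Poly_Mapping.keys f. \<Sum>m'\<in>Poly_Mapping.keys g.
      Poly_Mapping.single (m + m') (Poly_Mapping.lookup f m * Poly_Mapping.lookup g m'))"
    by (subst (1 2) sum_single_lookup[symmetric]) (simp add: sum_product mult_single)
  then have "peval \<kappa> \<sigma> (f * g) = (\<Sum>m\<in>Poly_Mapping.keys f. \<Sum>m'\<in>Poly_Mapping.keys g.
      \<kappa> (Poly_Mapping.lookup f m) * monomial_value \<sigma> m *
      (\<kappa> (Poly_Mapping.lookup g m') * monomial_value \<sigma> m'))"
    by (simp add: sum peval_single hom_mult monomial_value_add mult_ac)
  also have "\<dots> = peval \<kappa> \<sigma> f * peval \<kappa> \<sigma> g"
    by (simp add: peval_def sum_product)
  finally show ?thesis .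
qed

lemma ring_hom_peval: "ring_hom (peval \<kappa> \<sigma>)"
  by unfold_locales (simp_all add: peval_add peval_mult peval_single flip: single_one)

sublocale peval: ring_hom "peval \<kappa> \<sigma>" for \<sigma>
  by (rule ring_hom_peval)

lemmas peval_hom_simps [simp] =
  peval.hom_add peval.hom_mult peval.hom_diff peval.hom_uminus peval.hom_power

lemma peval_Const [simp]: "peval \<kappa> \<sigma> (Const c) = \<kappa> c"
  by (simp add: Const_def peval_single)

lemma peval_Var [simp]: "peval \<kappa> \<sigma> (Var i) = \<sigma> i"
proof -
  have "monomial_value \<sigma> (Poly_Mapping.single i 1) = (\<Prod>j\<in>UNIV. if i = j then \<sigma> j else 1)"
    unfolding monomial_value_def by (rule prod.cong) (auto simp: lookup_single when_def)
  then show ?thesis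
    by (simp add: Var_def peval_single)
qed

lemma peval_unique:
  assumes "\<And>a b. h (a + b) = h a + h b" "\<And>a b. h (a * b) = h a * h b"
    and "\<And>c. h (Const c) = \<kappa> c" "\<And>i. h (Var i) = \<sigma> i"
  shows "h f = peval \<kappa> \<sigma> f"
  by (induction f rule: mpoly4_induct) (simp_all add: assms)

end

interpretation Const: complex_hom Const
  by unfold_locales (simp_all add: Const_add Const_mult)

lemma Const_power_eq_1: "\<epsilon> ^ n = 1 \<Longrightarrow> Const \<epsilon> ^ n = 1"
  by (metis Const.hom_power Const.hom_one)

lemma (in complex_hom) peval_psubst:
  "peval \<kappa> \<sigma> (psubst \<tau> f) = peval \<kappa> (\<lambda>i. peval \<kappa> \<sigma> (\<tau> i)) f"
  by (rule peval_unique) simp_all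

interpretation point: complex_hom "id :: complex \<Rightarrow> complex"
  by unfold_locales simp_all

definition PConst :: "complex \<Rightarrow> mpoly4 poly" where
  "PConst c = [:Const c:]"

interpretation PConst: complex_hom PConst
  by unfold_locales (simp_all add: PConst_def Const_add Const_mult)

lemma poly_PConst [simp]: "poly (PConst c) r = Const c"
  by (simp add: PConst_def)

lemma psubst_Var: "psubst Var f = f"
  by (rule Const.peval_unique[symmetric]) simp_all

lemma poly_peval_PConst: "poly (peval PConst \<sigma> f) r = psubst (\<lambda>i. poly (\<sigma> i) r) f"
  by (rule Const.peval_unique) simp_all

lemma Const_mult_Var: "Const a * Var i = Poly_Mapping.single (Poly_Mapping.single i 1) a"
  by (simp add: Const_def Var_def mult_single)

lemma lookup_Const_mult_Var:
  "Poly_Mapping.lookup (Const a * Var i) (Poly_Mapping.single j 1) = (if i = j then a else 0)"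
proof -
  have "Poly_Mapping.single i (1::nat) = Poly_Mapping.single j 1 \<longleftrightarrow> i = j"
    by (metis lookup_single_eq lookup_single_not_eq zero_neq_one)
  then show ?thesis
    by (simp add: Const_mult_Var lookup_single when_def)
qed

lemma Const_mult_Var_eqD: "Const a * Var i = Const b * Var j \<Longrightarrow> a = (if i = j then b else 0)"
  using lookup_Const_mult_Var[of a i i] lookup_Const_mult_Var[of b j i] by metis

lemma Const_mult_Var_eq_0_iff: "Const a * Var i = 0 \<longleftrightarrow> a = 0"
  using lookup_Const_mult_Var[of a i i] by auto

lemma degree_peval_PConst_le:
  assumes "\<And>i. degree (\<sigma> i) \<le> 1" and "homogeneous d f"
  shows "degree (peval PConst \<sigma> f) \<le> d"
  unfolding peval_def
proof (rule degree_sum_le)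
  fix m assume m: "m \<in> Poly_Mapping.keys f"
  have "degree (monomial_value \<sigma> m) \<le> (\<Sum>i\<in>UNIV. degree (\<sigma> i ^ Poly_Mapping.lookup m i))"
    unfolding monomial_value_def
    using degree_prod_sum_le[of UNIV "\<lambda>i. \<sigma> i ^ Poly_Mapping.lookup m i"] by (simp add: o_def)
  also have "\<dots> \<le> (\<Sum>i\<in>UNIV. Poly_Mapping.lookup m i)"
    by (rule sum_mono) (metis assms(1) degree_power_le le_trans mult_le_cancel2 mult_1)
  also have "\<dots> = d"
    using assms(2) m by (simp add: homogeneous_def)
  finally show "degree (PConst (Poly_Mapping.lookup f m) * monomial_value \<sigma> m) \<le> d"
    using degree_mult_le[of "PConst (Poly_Mapping.lookup f m)"] by (simp add: PConst_def)
qed simp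

lemma homogeneous_mult: "homogeneous a f \<Longrightarrow> homogeneous b g \<Longrightarrow> homogeneous (a + b) (f * g)"
  unfolding homogeneous_def by (fastforce dest: keys_mult[THEN subsetD] simp: lookup_add sum.distrib)

lemma homogeneous_diff: "homogeneous d f \<Longrightarrow> homogeneous d g \<Longrightarrow> homogeneous d (f - g)"
  using keys_diff[of f g] unfolding homogeneous_def by blast

lemma homogeneous_power: "homogeneous d f \<Longrightarrow> homogeneous (k * d) (f ^ k)"
  by (induction k) (simp_all add: homogeneous_mult, simp add: homogeneous_def)

lemma homogeneous_Var: "homogeneous 1 (Var i)"
  by (simp add: homogeneous_def Var_def lookup_single when_def)

lemma alpha_le: "f \<in> J \<Longrightarrow> f \<noteq> 0 \<Longrightarrow> homogeneous d f \<Longrightarrow> alpha J \<le> d"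
  unfolding alpha_def by (rule Least_le) blast

lemma le_alpha:
  assumes "f \<in> J" "f \<noteq> 0" "homogeneous d f"
    and "\<And>f d. f \<in> J \<Longrightarrow> f \<noteq> 0 \<Longrightarrow> homogeneous d f \<Longrightarrow> k \<le> d"
  shows "k \<le> alpha J"
  unfolding alpha_def by (rule LeastI2_ex) (use assms in blast)+

section \<open>Vanishing order along an associated line\<close>

lemma psubst_diff_mem:
  assumes J: "is_ideal J" and retract: "\<And>i. Var i - \<tau> i \<in> J"
  shows "f - psubst \<tau> f \<in> J"
proof (induction f rule: mpoly4_induct)
  case (Const c)
  then show ?case using ideal_zero[OF J] by simp
next
  case (Var i)
  then show ?case using retract by simp
next
  case (add a b)
  have "a + b - psubst \<tau> (a + b) = (a - psubst \<tau> a) + (b - psubst \<tau> b)"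
    by simp
  then show ?case using ideal_add[OF J add] by metis
next
  case (mult a b)
  have "a * b - psubst \<tau> (a * b) = a * (b - psubst \<tau> b) + psubst \<tau> b * (a - psubst \<tau> a)"
    by (simp add: algebra_simps)
  then show ?case using ideal_add[OF J ideal_mult_left[OF J mult(2)] ideal_mult_left[OF J mult(1)]]
    by metis
qed

text \<open>
  A line is encoded by a substitution \<tau> restricting polynomials to it; its ideal is the kernel
  of psubst \<tau>. This kernel is the colon ideal (ideal_gen S : g), hence associated, as soon as
  g does not vanish on the line and g L \<subseteq> ideal_gen S for linear forms L cutting out the line.
\<close>
lemma kernel_mem_ass_primes:
  assumes retract: "\<And>i. Var i - \<tau> i \<in> ideal_gen L"
    and L: "\<And>l. l \<in> L \<Longrightarrow> l * g \<in> ideal_gen S"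
    and vanish: "\<And>G. G \<in> S \<Longrightarrow> psubst \<tau> G = 0"
    and g: "psubst \<tau> g \<noteq> 0"
  shows "{p. psubst \<tau> p = 0} \<in> ass_primes (ideal_gen S)"
proof -
  have L_colon: "ideal_gen L \<subseteq> {r. r * g \<in> ideal_gen S}"
    using L by (intro ideal_gen_minimal is_ideal_colon is_ideal_ideal_gen) blast
  have colon: "{r. r * g \<in> ideal_gen S} = {p. psubst \<tau> p = 0}"
  proof safe
    fix r assume "r * g \<in> ideal_gen S"
    then have "psubst \<tau> (r * g) = 0"
      using Const.peval.hom_eq_0_on_ideal_gen[OF vanish] by blast
    then show "psubst \<tau> r = 0" using g by simp
  next
    fix r assume "psubst \<tau> r = 0"
    then have "r \<in> ideal_gen L"
      using psubst_diff_mem[OF is_ideal_ideal_gen retract, of r] by simp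
    then show "r * g \<in> ideal_gen S" using L_colon by blast
  qed
  have "is_ideal (psubst \<tau> -` {0})"
    by (rule Const.peval.is_ideal_vimage) (simp add: is_ideal_def)
  then have "prime_ideal {p. psubst \<tau> p = 0}"
    unfolding prime_ideal_def vimage_def by simp
  then show ?thesis
    unfolding ass_primes_def using colon by blast
qed

text \<open>
  The point \<sigma> depends polynomially on a parameter t and lies on the line at t = r, in the sense
  that \<theta> maps it to \<tau>. A multiplier s outside the kernel of psubst \<tau> therefore does not
  vanish at t = r, so the m-fold root at r coming from s f \<in> I^m is a root of f alone.
\<close>
lemma symbolic_power_root_order:
  assumes f: "f \<in> symbolic_power (ideal_gen S) m"
    and P: "{p. psubst \<tau> p = 0} \<in> ass_primes (ideal_gen S)"
    and vanish: "\<And>G. G \<in> S \<Longrightarrow> psubst (\<lambda>i. poly (\<sigma> i) r) G = 0"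
    and factor: "\<And>i. psubst \<theta> (poly (\<sigma> i) r) = \<tau> i"
    and nz: "peval PConst \<sigma> f \<noteq> 0"
  shows "m \<le> order r (peval PConst \<sigma> f)"
proof -
  let ?h = "peval PConst \<sigma>" and ?q = "[:- r, 1:]"
  obtain s where s: "s \<notin> {p. psubst \<tau> p = 0}" "s * f \<in> ideal_pow (ideal_gen S) m"
    using symbolic_powerE[OF f P] by blast
  have "?h ` ideal_gen S \<subseteq> {p. ?q dvd p}"
  proof (rule image_subsetI)
    fix p assume "p \<in> ideal_gen S"
    then have "poly (?h p) r = 0"
      using Const.peval.hom_eq_0_on_ideal_gen[OF vanish] by (simp add: poly_peval_PConst)
    then show "?h p \<in> {p. ?q dvd p}"
      by (simp add: poly_eq_0_iff_dvd)
  qed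
  moreover have "prod_list ys \<in> {p. ?q ^ m dvd p}"
    if "length ys = m" "set ys \<subseteq> {p. ?q dvd p}" for ys
  proof -
    have "?q dvd y" if "y \<in> set ys" for y
      using that \<open>set ys \<subseteq> _\<close> by blast
    then show ?thesis
      using power_dvd_prod_list[of ys ?q] \<open>length ys = m\<close> by simp
  qed
  ultimately have "?h ` ideal_pow (ideal_gen S) m \<subseteq> {p. ?q ^ m dvd p}"
    by (rule PConst.peval.image_ideal_pow_subset[OF is_ideal_multiples])
  then have "?h (s * f) \<in> {p. ?q ^ m dvd p}"
    using s(2) by blast
  then have dvd: "?q ^ m dvd ?h s * ?h f"
    by simp
  have "psubst \<theta> (poly (?h s) r) = psubst \<tau> s"
    by (simp add: poly_peval_PConst Const.peval_psubst factor)
  then have s_r: "poly (?h s) r \<noteq> 0"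
    using s(1) by auto
  then have prod_nz: "?h s * ?h f \<noteq> 0"
    using nz by auto
  then have "m \<le> order r (?h s * ?h f)"
    using dvd by (simp add: order_divides)
  also have "\<dots> = order r (?h f)"
    using order_mult[OF prod_nz] order_0I[OF s_r] by simp
  finally show ?thesis .
qed

section \<open>The generators and their symmetry\<close>

definition gen :: "nat \<Rightarrow> 4 \<Rightarrow> 4 \<Rightarrow> 4 \<Rightarrow> 4 \<Rightarrow> mpoly4" where
  "gen n a b c d = (Var a ^ n - Var b ^ n) * (Var c ^ n - Var d ^ n) * Var a * Var b"

definition gens :: "nat \<Rightarrow> mpoly4 set" where
  "gens n = {gen n 0 1 2 3, gen n 2 3 0 1, gen n 0 2 1 3, gen n 1 3 0 2, gen n 0 3 1 2, gen n 1 2 0 3}"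

abbreviation gens_ideal :: "nat \<Rightarrow> mpoly4 set" where
  "gens_ideal n \<equiv> ideal_gen (gens n)"

lemma exhaust_4: "(a::4) = 0 \<or> a = 1 \<or> a = 2 \<or> a = 3"
proof (induct a)
  case (of_int z)
  then have "z = 0 \<or> z = 1 \<or> z = 2 \<or> z = 3" by fastforce
  then show ?case by auto
qed

lemma gen_in_gens_up_to_order:
  assumes "distinct [a, b, c, d]"
  shows "gen n a b c d \<in> gens n \<or> gen n b a c d \<in> gens n \<or>
         gen n a b d c \<in> gens n \<or> gen n b a d c \<in> gens n"
  using exhaust_4[of a] exhaust_4[of b] exhaust_4[of c] exhaust_4[of d] assms
  by (elim disjE) (simp_all add: gens_def)

lemma gen_mem_gens_ideal:
  assumes "distinct [a, b, c, d]"
  shows "gen n a b c d \<in> gens_ideal n"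
proof -
  have swap: "gen n b a c d = - gen n a b c d" "gen n a b d c = - gen n a b c d"
    "gen n b a d c = gen n a b c d"
    by (simp_all add: gen_def algebra_simps)
  have "- p \<in> gens_ideal n" if "p \<in> gens_ideal n" for p
    using ideal_mult_left[OF is_ideal_ideal_gen that, of "- 1"] by simp
  then show ?thesis
    using gen_in_gens_up_to_order[OF assms] ideal_gen_superset[of "gens n"] swap
    by (metis minus_minus subsetD)
qed

lemma gen_mult_mem: "distinct [a, b, c, d] \<Longrightarrow> gen n a b c d * h \<in> gens_ideal n"
  by (rule ideal_mult_right[OF is_ideal_ideal_gen gen_mem_gens_ideal])

lemma psubst_perm_gens_ideal:
  assumes "inj p"
  shows "psubst (Var \<circ> p) ` gens_ideal n \<subseteq> gens_ideal n"
proof (rule Const.peval.image_ideal_gen_subset[OF is_ideal_ideal_gen])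
  have "psubst (Var \<circ> p) (gen n a b c d) \<in> gens_ideal n" if "distinct [a, b, c, d]" for a b c d
  proof -
    have "psubst (Var \<circ> p) (gen n a b c d) = gen n (p a) (p b) (p c) (p d)"
      by (simp add: gen_def)
    then show ?thesis
      using that assms by (simp add: gen_mem_gens_ideal inj_eq)
  qed
  then show "psubst (Var \<circ> p) ` gens n \<subseteq> gens_ideal n"
    unfolding gens_def by simp
qed

section \<open>The associated lines\<close>

lemma norm_root_of_unity: "\<epsilon> ^ n = 1 \<Longrightarrow> n \<ge> 1 \<Longrightarrow> norm (\<epsilon>::complex) = 1"
  using power_eq_1_iff[of \<epsilon> n] by auto

lemma two_power_ne_1: "n \<ge> 1 \<Longrightarrow> (2::complex) ^ n \<noteq> 1"
  using power_eq_1_iff[of "2::complex" n] by auto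

definition cofactor :: "complex \<Rightarrow> 4 \<Rightarrow> 4 \<Rightarrow> nat \<Rightarrow> mpoly4" where
  "cofactor \<epsilon> a b n = (\<Sum>i<n. (Const \<epsilon> * Var b) ^ (n - Suc i) * Var a ^ i)"

lemma cofactor_mult:
  "\<epsilon> ^ n = 1 \<Longrightarrow> (Var a - Const \<epsilon> * Var b) * cofactor \<epsilon> a b n = Var a ^ n - Var b ^ n"
  using power_diff_sumr2[of "Var a" n "Const \<epsilon> * Var b"]
  by (simp add: cofactor_def power_mult_distrib Const_power_eq_1)

lemma peval_cofactor:
  assumes "\<sigma> a = \<epsilon> * \<sigma> b"
  shows "peval id \<sigma> (cofactor \<epsilon> a b n) = of_nat n * (\<epsilon> * \<sigma> b) ^ (n - 1)"
proof -
  have "peval id \<sigma> (cofactor \<epsilon> a b n) = (\<Sum>i<n. (\<epsilon> * \<sigma> b) ^ (n - Suc i) * (\<epsilon> * \<sigma> b) ^ i)"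
    by (simp add: cofactor_def point.peval.hom_sum assms)
  also have "\<dots> = (\<Sum>i<n. (\<epsilon> * \<sigma> b) ^ (n - 1))"
    by (rule sum.cong) (auto simp: power_add[symmetric])
  finally show ?thesis
    by simp
qed

definition line_xy0 :: "4 \<Rightarrow> mpoly4" where
  "line_xy0 i = (if i = 0 \<or> i = 1 then 0 else Var i)"

definition line_eps :: "complex \<Rightarrow> complex \<Rightarrow> 4 \<Rightarrow> 4 \<Rightarrow> mpoly4" where
  "line_eps \<epsilon> \<eta> k i = (if i = 0 then Const \<epsilon> * Var 1 else if i = k then Const \<eta> * Var 1 else Var i)"

lemma ass_prime_line_xy0:
  assumes "n \<ge> 1"
  shows "{p. psubst line_xy0 p = 0} \<in> ass_primes (gens_ideal n)"
proof -
  define g where "g = (Var 0 ^ n - Var 2 ^ n) * (Var 1 ^ n - Var 3 ^ n) * Var 2 * Var 3"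
  have L: "l * g \<in> gens_ideal n" if "l \<in> {Var 0, Var 1}" for l
  proof -
    have "Var 0 * g \<in> gens_ideal n"
      using gen_mult_mem[of 0 2 1 3 n "Var 3"] by (simp add: g_def gen_def mult_ac)
    moreover have "Var 1 * g \<in> gens_ideal n"
      using gen_mult_mem[of 1 3 0 2 n "Var 2"] by (simp add: g_def gen_def mult_ac)
    ultimately show ?thesis
      using that by blast
  qed
  have retract: "Var i - line_xy0 i \<in> ideal_gen {Var 0, Var 1}" for i
    using ideal_gen_superset[of "{Var 0, Var 1}"] ideal_zero[OF is_ideal_ideal_gen]
    by (auto simp: line_xy0_def)
  have vanish: "psubst line_xy0 G = 0" if "G \<in> gens n" for G
    using that assms by (auto simp: gens_def gen_def line_xy0_def power_0_left)
  have "peval id (\<lambda>_. 1) (psubst line_xy0 g) = 1"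
    using assms by (simp add: g_def line_xy0_def point.peval_psubst power_0_left)
  then have nz: "psubst line_xy0 g \<noteq> 0"
    by auto
  show ?thesis
    by (rule kernel_mem_ass_primes[OF retract L vanish nz])
qed

definition line_eps_witness :: "complex \<Rightarrow> complex \<Rightarrow> 4 \<Rightarrow> 4 \<Rightarrow> nat \<Rightarrow> mpoly4" where
  "line_eps_witness \<epsilon> \<eta> k l n = cofactor \<epsilon> 0 1 n * cofactor \<eta> k 1 n * (Var 2 ^ n - Var 3 ^ n) *
    (Var 0 ^ n - Var l ^ n) * Var 0 * Var 1 * Var l"

lemma line_eps_witness_mult_mem:
  assumes \<epsilon>: "\<epsilon> ^ n = 1" and \<eta>: "\<eta> ^ n = 1" and kl: "distinct [0, l, k, 1]"
  shows "(Var 0 - Const \<epsilon> * Var 1) * line_eps_witness \<epsilon> \<eta> k l n \<in> gens_ideal n"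
    and "(Var k - Const \<eta> * Var 1) * line_eps_witness \<epsilon> \<eta> k l n \<in> gens_ideal n"
proof -
  let ?g = "line_eps_witness \<epsilon> \<eta> k l n"
  have "(Var 0 - Const \<epsilon> * Var 1) * ?g = ((Var 0 - Const \<epsilon> * Var 1) * cofactor \<epsilon> 0 1 n) *
      (cofactor \<eta> k 1 n * (Var 2 ^ n - Var 3 ^ n) * (Var 0 ^ n - Var l ^ n) * Var 0 * Var 1 * Var l)"
    by (simp add: line_eps_witness_def mult_ac)
  also have "\<dots> = gen n 0 1 2 3 * (cofactor \<eta> k 1 n * (Var 0 ^ n - Var l ^ n) * Var l)"
    unfolding cofactor_mult[OF \<epsilon>] by (simp add: gen_def mult_ac)
  finally show "(Var 0 - Const \<epsilon> * Var 1) * ?g \<in> gens_ideal n"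
    by (simp add: gen_mult_mem)
  have "(Var k - Const \<eta> * Var 1) * ?g = ((Var k - Const \<eta> * Var 1) * cofactor \<eta> k 1 n) *
      (cofactor \<epsilon> 0 1 n * (Var 2 ^ n - Var 3 ^ n) * (Var 0 ^ n - Var l ^ n) * Var 0 * Var 1 * Var l)"
    by (simp add: line_eps_witness_def mult_ac)
  also have "\<dots> = gen n 0 l k 1 * (cofactor \<epsilon> 0 1 n * (Var 2 ^ n - Var 3 ^ n) * Var 1)"
    unfolding cofactor_mult[OF \<eta>] by (simp add: gen_def mult_ac)
  finally show "(Var k - Const \<eta> * Var 1) * ?g \<in> gens_ideal n"
    using gen_mult_mem[OF kl] by simp
qed

lemma ass_prime_line_eps:
  assumes n: "n \<ge> 1" and \<epsilon>: "\<epsilon> ^ n = 1" and \<eta>: "\<eta> ^ n = 1" and kl: "{k, l} = {2, 3}"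
  shows "{p. psubst (line_eps \<epsilon> \<eta> k) p = 0} \<in> ass_primes (gens_ideal n)"
proof -
  let ?g = "line_eps_witness \<epsilon> \<eta> k l n"
  have kl_cases: "k = 2 \<and> l = 3 \<or> k = 3 \<and> l = 2"
    using kl by (auto simp: doubleton_eq_iff)
  then have kl_distinct: "distinct [0, l, k, 1]"
    by auto
  have L: "h * ?g \<in> gens_ideal n"
    if "h \<in> {Var 0 - Const \<epsilon> * Var 1, Var k - Const \<eta> * Var 1}" for h
    using that line_eps_witness_mult_mem[OF \<epsilon> \<eta> kl_distinct] by blast
  have retract: "Var i - line_eps \<epsilon> \<eta> k i \<in> ideal_gen {Var 0 - Const \<epsilon> * Var 1, Var k - Const \<eta> * Var 1}"
    for i
    using kl_distinct ideal_gen_superset[of "{Var 0 - Const \<epsilon> * Var 1, Var k - Const \<eta> * Var 1}"]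
      ideal_zero[OF is_ideal_ideal_gen] by (auto simp: line_eps_def)
  have vanish: "psubst (line_eps \<epsilon> \<eta> k) G = 0" if "G \<in> gens n" for G
    using kl_cases that
    by (auto simp: gens_def gen_def line_eps_def power_mult_distrib
        Const_power_eq_1[OF \<epsilon>] Const_power_eq_1[OF \<eta>])
  define pt :: "4 \<Rightarrow> complex" where "pt = (\<lambda>i. if i = 1 then 1 else if i = l then 2 else 0)"
  have "\<epsilon> \<noteq> 0" "\<eta> \<noteq> 0" "(2::complex) ^ n \<noteq> 1"
    using norm_root_of_unity[OF \<epsilon> n] norm_root_of_unity[OF \<eta> n] two_power_ne_1[OF n] by auto
  then have "peval id pt (psubst (line_eps \<epsilon> \<eta> k) ?g) \<noteq> 0"
    using kl_cases n \<epsilon> \<eta>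
    by (auto simp: line_eps_witness_def pt_def line_eps_def point.peval_psubst peval_cofactor)
  then have nz: "psubst (line_eps \<epsilon> \<eta> k) ?g \<noteq> 0"
    by auto
  show ?thesis
    by (rule kernel_mem_ass_primes[OF retract L vanish nz])
qed

section \<open>Vanishing on planes\<close>

lemma mult_card_le_degree_if_order_ge:
  fixes p :: "'a::idom poly"
  assumes "p \<noteq> 0" "finite S" "\<And>a. a \<in> S \<Longrightarrow> m \<le> order a p"
  shows "m * card S \<le> degree p"
proof -
  have "repeat_mset m (mset_set S) \<subseteq># proots p"
    using assms by (auto simp: subseteq_mset_def count_mset_set')
  then have "size (repeat_mset m (mset_set S)) \<le> degree p"
    using size_mset_mono size_proots_le order_trans by blast
  then show ?thesis by simp
qed

text \<open>
  The plane x = \<epsilon>y parametrised as (\<epsilon>t, t, z, w): a polynomial in t with coefficients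
  in \<complex>[z,w].
\<close>
definition plane_pencil :: "complex \<Rightarrow> 4 \<Rightarrow> mpoly4 poly" where
  "plane_pencil \<epsilon> i = (if i = 0 then [:0, Const \<epsilon>:] else if i = 1 then [:0, 1:] else [:Var i:])"

lemma order_plane_pencil_at_0:
  assumes n: "n \<ge> 1" and f: "f \<in> symbolic_power (gens_ideal n) m"
    and nz: "peval PConst (plane_pencil \<epsilon>) f \<noteq> 0"
  shows "m \<le> order 0 (peval PConst (plane_pencil \<epsilon>) f)"
proof (rule symbolic_power_root_order[OF f ass_prime_line_xy0[OF n] _ _ nz, where \<theta> = Var])
  show "psubst (\<lambda>i. poly (plane_pencil \<epsilon> i) 0) G = 0" if "G \<in> gens n" for G
    using that n by (auto simp: gens_def gen_def plane_pencil_def power_0_left)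
  show "psubst Var (poly (plane_pencil \<epsilon> i) 0) = line_xy0 i" for i
    by (simp add: psubst_Var plane_pencil_def line_xy0_def)
qed

lemma order_plane_pencil_at_line:
  assumes n: "n \<ge> 1" and \<epsilon>: "\<epsilon> ^ n = 1" and \<eta>: "\<eta> ^ n = 1" and kl: "{k, l} = {2, 3}"
    and f: "f \<in> symbolic_power (gens_ideal n) m" and nz: "peval PConst (plane_pencil \<epsilon>) f \<noteq> 0"
  shows "m \<le> order (Const (inverse \<eta>) * Var k) (peval PConst (plane_pencil \<epsilon>) f)"
proof (rule symbolic_power_root_order[OF f ass_prime_line_eps[OF n \<epsilon> \<eta> kl] _ _ nz,
      where \<theta> = "\<lambda>i. if i = k then Const \<eta> * Var 1 else Var i"])
  have kl_cases: "k = 2 \<and> l = 3 \<or> k = 3 \<and> l = 2"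
    using kl by (auto simp: doubleton_eq_iff)
  have \<eta>': "inverse \<eta> ^ n = 1"
    using \<eta> by (simp add: power_inverse)
  show "psubst (\<lambda>i. poly (plane_pencil \<epsilon> i) (Const (inverse \<eta>) * Var k)) G = 0"
    if "G \<in> gens n" for G
    using that kl_cases
    by (auto simp: gens_def gen_def plane_pencil_def power_mult_distrib
        Const_power_eq_1[OF \<epsilon>] Const_power_eq_1[OF \<eta>'])
  have "\<eta> \<noteq> 0"
    using norm_root_of_unity[OF \<eta> n] by auto
  then have inv: "Const (inverse \<eta>) * Const \<eta> = 1"
    by (simp add: Const_mult[symmetric])
  show "psubst (\<lambda>i. if i = k then Const \<eta> * Var 1 else Var i)
      (poly (plane_pencil \<epsilon> i) (Const (inverse \<eta>) * Var k)) = line_eps \<epsilon> \<eta> k i" for i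
    using kl_cases inv
    by (auto simp: plane_pencil_def line_eps_def mult.assoc[symmetric] mult.commute[of _ "Const \<epsilon>"])
qed

lemma plane_pencil_vanishes:
  assumes n: "n \<ge> 1" and \<epsilon>: "\<epsilon> ^ n = 1" and f: "f \<in> symbolic_power (gens_ideal n) m"
    and deg: "degree (peval PConst (plane_pencil \<epsilon>) f) < m * (2 * n + 1)"
  shows "peval PConst (plane_pencil \<epsilon>) f = 0"
proof (rule ccontr)
  let ?p = "peval PConst (plane_pencil \<epsilon>) f"
  assume nz: "?p \<noteq> 0"
  define U where "U = {\<eta>::complex. \<eta> ^ n = 1}"
  define root where "root = (\<lambda>(\<eta>, k). Const (inverse \<eta>) * Var k)"
  define S where "S = insert 0 (root ` (U \<times> {2, 3}))"
  have U: "finite U" "card U = n"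
    using n by (auto simp: U_def card_roots_unity_eq)
  have U0: "0 \<notin> U"
    using n by (simp add: U_def power_0_left)
  have "inj_on root (U \<times> {2, 3})"
    by (rule inj_onI) (auto simp: root_def U0 dest!: Const_mult_Var_eqD split: if_splits)
  moreover have "0 \<notin> root ` (U \<times> {2, 3})"
    using U0 by (auto simp: root_def Const_mult_Var_eq_0_iff simp del: mult_eq_0_iff)
  ultimately have card: "card S = 2 * n + 1"
    using U by (simp add: S_def card_image card_cartesian_product)
  have "m \<le> order (root (\<eta>, k)) ?p" if "\<eta> \<in> U" "k \<in> {2, 3}" for \<eta> k
  proof -
    have kl: "{k, if k = 2 then 3 else 2} = {2, 3}"
      using that(2) by auto
    show ?thesis
      using order_plane_pencil_at_line[OF n \<epsilon> _ kl f nz] that(1) by (simp add: U_def root_def)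
  qed
  then have "m \<le> order a ?p" if "a \<in> S" for a
    using that order_plane_pencil_at_0[OF n f nz] by (auto simp: S_def)
  then have "m * card S \<le> degree ?p"
    using U by (intro mult_card_le_degree_if_order_ge[OF nz]) (simp_all add: S_def)
  then show False
    using deg card by simp
qed

definition hyperplane :: "4 \<Rightarrow> 4 \<Rightarrow> complex \<Rightarrow> 4 \<Rightarrow> mpoly4" where
  "hyperplane i j \<epsilon> k = (if k = i then Const \<epsilon> * Var j else Var k)"

lemma plane_pencil_at_Var1: "(\<lambda>i. poly (plane_pencil \<epsilon> i) (Var 1)) = hyperplane 0 1 \<epsilon>"
  by (auto simp: plane_pencil_def hyperplane_def mult.commute)

lemma vanishes_on_hyperplane_perm:
  assumes n: "n \<ge> 1" and \<epsilon>: "\<epsilon> ^ n = 1" and f: "f \<in> symbolic_power (gens_ideal n) m"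
    and hom: "homogeneous d f" and d: "d < m * (2 * n + 1)" and p: "\<And>i. p (p i) = i"
  shows "psubst (hyperplane (p 0) (p 1) \<epsilon>) f = 0"
proof -
  let ?\<pi> = "psubst (Var \<circ> p)"
  have inv: "?\<pi> (?\<pi> h) = h" for h
    by (simp add: Const.peval_psubst p psubst_Var)
  have "inj p"
    by (metis injI p)
  then have f': "?\<pi> f \<in> symbolic_power (gens_ideal n) m"
    using symbolic_power_involution_closed[OF Const.ring_hom_peval inv psubst_perm_gens_ideal f]
    by blast
  have "peval PConst (plane_pencil \<epsilon>) (?\<pi> f) = peval PConst (plane_pencil \<epsilon> \<circ> p) f"
    by (simp add: PConst.peval_psubst comp_def)
  moreover have "degree (peval PConst (plane_pencil \<epsilon> \<circ> p) f) \<le> d"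
    using hom by (intro degree_peval_PConst_le) (simp add: plane_pencil_def)
  ultimately have "peval PConst (plane_pencil \<epsilon>) (?\<pi> f) = 0"
    using plane_pencil_vanishes[OF n \<epsilon> f'] d by simp
  then have "psubst (hyperplane 0 1 \<epsilon>) (?\<pi> f) = 0"
    using poly_peval_PConst[of "plane_pencil \<epsilon>" "?\<pi> f" "Var 1"] by (simp add: plane_pencil_at_Var1)
  then have "?\<pi> (psubst (hyperplane 0 1 \<epsilon>) (?\<pi> f)) = 0"
    by simp
  moreover have "?\<pi> (hyperplane 0 1 \<epsilon> (p k)) = hyperplane (p 0) (p 1) \<epsilon> k" for k
    using p[of k] p[of 0] by (cases "k = p 0") (auto simp: hyperplane_def)
  ultimately show ?thesis
    by (simp add: Const.peval_psubst)
qed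

definition hyperplane_pairs :: "(4 \<times> 4) set" where
  "hyperplane_pairs = {(0, 1), (0, 2), (0, 3), (2, 1), (3, 1)}"

lemma vanishes_on_hyperplanes:
  assumes "n \<ge> 1" "\<epsilon> ^ n = 1" "f \<in> symbolic_power (gens_ideal n) m"
    and "homogeneous d f" "d < m * (2 * n + 1)" and ij: "(i, j) \<in> hyperplane_pairs"
  shows "psubst (hyperplane i j \<epsilon>) f = 0"
proof -
  obtain p where "\<And>k. p (p k) = k" "p 0 = i" "p 1 = j"
  proof -
    from ij consider "i = 0" "j = 1" | "i = 0" "j = 2" | "i = 0" "j = 3" | "i = 2" "j = 1" | "i = 3" "j = 1"
      by (auto simp: hyperplane_pairs_def)
    then show thesis
    proof cases
      case 1
      then show thesis using that[of id] by simp
    next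
      case 2
      then show thesis using that[of "Transposition.transpose 1 2"] by simp
    next
      case 3
      then show thesis using that[of "Transposition.transpose 1 3"] by simp
    next
      case 4
      then show thesis using that[of "Transposition.transpose 0 2"] by simp
    next
      case 5
      then show thesis using that[of "Transposition.transpose 0 3"] by simp
    qed
  qed
  then show ?thesis
    using vanishes_on_hyperplane_perm[OF assms(1-5)] by metis
qed

section \<open>Counting on a generic line\<close>

definition direction :: "4 \<Rightarrow> complex" where
  "direction k = (if k = 0 then 1 else if k = 1 then 2 else if k = 2 then 3 else 4)"

text \<open>
  The line through the generic point (x, y, z, w) with the direction vector above. It meets the
  hyperplane x_i = \<epsilon>x_j at the parameter crossing i j \<epsilon>; the direction entries have distinct
  absolute values, so the denominator does not vanish.
\<close>
definition generic_line :: "4 \<Rightarrow> mpoly4 poly" where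
  "generic_line k = [:Var k, Const (direction k):]"

definition crossing :: "4 \<Rightarrow> 4 \<Rightarrow> complex \<Rightarrow> mpoly4" where
  "crossing i j \<epsilon> = Const (inverse (direction i - \<epsilon> * direction j)) * (Const \<epsilon> * Var j - Var i)"

lemma direction_diff_ne_0:
  assumes "(i, j) \<in> hyperplane_pairs" "norm \<epsilon> = 1"
  shows "direction i - \<epsilon> * direction j \<noteq> 0"
proof
  assume "direction i - \<epsilon> * direction j = 0"
  then have "norm (direction i) = norm (direction j)"
    using assms(2) by (simp add: norm_mult)
  then show False
    using assms(1) by (auto simp: hyperplane_pairs_def direction_def)
qed

lemma poly_generic_line_crossing:
  assumes ij: "(i, j) \<in> hyperplane_pairs" and \<epsilon>: "norm \<epsilon> = 1"
    and f: "psubst (hyperplane i j \<epsilon>) f = 0"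
  shows "poly (peval PConst generic_line f) (crossing i j \<epsilon>) = 0"
proof -
  define r where "r = crossing i j \<epsilon>"
  define \<delta> where "\<delta> = direction i - \<epsilon> * direction j"
  define \<nu> where "\<nu> = (\<lambda>k. Var k + r * Const (direction k))"
  have "\<delta> \<noteq> 0"
    using direction_diff_ne_0[OF ij \<epsilon>] by (simp add: \<delta>_def)
  then have r\<delta>: "r * Const \<delta> = Const \<epsilon> * Var j - Var i"
    unfolding r_def crossing_def \<delta>_def[symmetric]
    by (simp add: mult.commute mult.left_commute Const_mult[symmetric])
  have "Const (direction i) = Const \<delta> + Const \<epsilon> * Const (direction j)"
    by (simp add: \<delta>_def Const_add[symmetric] Const_mult[symmetric])
  then have "Const \<epsilon> * (Var j + r * Const (direction j)) = Var i + r * Const (direction i)"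
    using r\<delta> by algebra
  then have "(\<lambda>k. psubst \<nu> (hyperplane i j \<epsilon> k)) = \<nu>"
    by (auto simp: hyperplane_def \<nu>_def)
  then have "psubst \<nu> (psubst (hyperplane i j \<epsilon>) f) = psubst \<nu> f"
    by (simp add: Const.peval_psubst)
  moreover have "poly (peval PConst generic_line f) r = psubst \<nu> f"
    by (simp add: poly_peval_PConst generic_line_def \<nu>_def)
  ultimately show ?thesis
    using f by (simp add: r_def)
qed

lemma crossing_inj:
  assumes "(i, j) \<in> hyperplane_pairs" "(i', j') \<in> hyperplane_pairs" "norm \<epsilon> = 1" "norm \<epsilon>' = 1"
    and eq: "crossing i j \<epsilon> = crossing i' j' \<epsilon>'"
  shows "i = i' \<and> j = j' \<and> \<epsilon> = \<epsilon>'"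
proof -
  have crossing_eq: "crossing i j \<epsilon> =
      Const (inverse (direction i - \<epsilon> * direction j) * \<epsilon>) * Var j -
      Const (inverse (direction i - \<epsilon> * direction j)) * Var i" for i j \<epsilon>
    by (simp add: crossing_def Const_mult algebra_simps)
  have "direction i - \<epsilon> * direction j \<noteq> 0" "direction i' - \<epsilon>' * direction j' \<noteq> 0"
    using direction_diff_ne_0 assms(1-4) by auto
  moreover have "\<And>k. Poly_Mapping.lookup (crossing i j \<epsilon>) (Poly_Mapping.single k 1) =
      Poly_Mapping.lookup (crossing i' j' \<epsilon>') (Poly_Mapping.single k 1)"
    using eq by simp
  note this[of 0] this[of 1] this[of 2] this[of 3]
  ultimately show ?thesis
    using assms(1-4) unfolding crossing_eq lookup_minus lookup_Const_mult_Var
    by (auto simp: hyperplane_pairs_def direction_def)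
qed

lemma degree_ge_if_vanishes_on_hyperplanes:
  assumes n: "n \<ge> 1" and f: "f \<noteq> 0" and hom: "homogeneous d f"
    and vanish: "\<And>\<epsilon> i j. \<epsilon> ^ n = 1 \<Longrightarrow> (i, j) \<in> hyperplane_pairs \<Longrightarrow> psubst (hyperplane i j \<epsilon>) f = 0"
  shows "5 * n \<le> d"
proof -
  let ?p = "peval PConst generic_line f"
  have "poly ?p 0 = f"
    by (simp add: poly_peval_PConst generic_line_def psubst_Var)
  then have p: "?p \<noteq> 0"
    using f by auto
  have deg: "degree ?p \<le> d"
    by (rule degree_peval_PConst_le[OF _ hom]) (simp add: generic_line_def)
  define U where "U = {\<epsilon>::complex. \<epsilon> ^ n = 1}"
  define D where "D = hyperplane_pairs \<times> U"
  define R where "R = (\<lambda>((i, j), \<epsilon>). crossing i j \<epsilon>)"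
  have U: "norm \<epsilon> = 1" if "\<epsilon> \<in> U" for \<epsilon>
    using that n norm_root_of_unity by (auto simp: U_def)
  have inj: "inj_on R D"
  proof (rule inj_onI)
    fix a b assume a: "a \<in> D" and b: "b \<in> D" and eq: "R a = R b"
    obtain i j \<epsilon> i' j' \<epsilon>' where ab: "a = ((i, j), \<epsilon>)" "b = ((i', j'), \<epsilon>')"
      by (metis prod.collapse)
    show "a = b"
      using crossing_inj[of i j i' j' \<epsilon> \<epsilon>'] a b eq U unfolding ab D_def R_def by auto
  qed
  have roots: "R ` D \<subseteq> {x. poly ?p x = 0}"
  proof
    fix x assume "x \<in> R ` D"
    then obtain i j \<epsilon> where ij: "(i, j) \<in> hyperplane_pairs" and "\<epsilon> \<in> U" and x: "x = crossing i j \<epsilon>"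
      by (auto simp: D_def R_def)
    then show "x \<in> {x. poly ?p x = 0}"
      using poly_generic_line_crossing[OF ij U vanish] by (simp add: U_def)
  qed
  have "5 * n = card (R ` D)"
    using card_image[OF inj] n
    by (simp add: D_def U_def card_cartesian_product card_roots_unity_eq hyperplane_pairs_def)
  also have "\<dots> \<le> card {x. poly ?p x = 0}"
    by (rule card_mono[OF poly_roots_finite[OF p] roots])
  also have "\<dots> \<le> degree ?p"
    by (rule card_poly_roots_bound[OF p])
  finally show ?thesis
    using deg by simp
qed

section \<open>The two bounds\<close>

lemma homogeneous_gen: "homogeneous (2 * n + 2) (gen n a b c d)"
proof -
  have "homogeneous n (Var i ^ n)" for i
    using homogeneous_power[OF homogeneous_Var[of i], where k = n] by simp
  then have "homogeneous (n + n + 1 + 1) (gen n a b c d)"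
    unfolding gen_def by (intro homogeneous_mult homogeneous_diff homogeneous_Var)
  then show ?thesis
    by (simp add: mult_2)
qed

lemma gen_square_witness:
  assumes "n \<ge> 1"
  shows "gen n 0 1 2 3 ^ 2 \<in> symbolic_power (gens_ideal n) 2"
    and "gen n 0 1 2 3 ^ 2 \<noteq> 0"
    and "homogeneous (4 * n + 4) (gen n 0 1 2 3 ^ 2)"
proof -
  let ?G = "gen n 0 1 2 3"
  have "?G \<in> gens_ideal n"
    by (simp add: gen_mem_gens_ideal)
  then have "prod_list [?G, ?G] \<in> ideal_pow (gens_ideal n) 2"
    by (intro prod_list_mem_ideal_pow) auto
  then show "?G ^ 2 \<in> symbolic_power (gens_ideal n) 2"
    using ideal_pow_subset_symbolic_power by (auto simp: power2_eq_square)
  have "peval id (\<lambda>i. if i = 0 \<or> i = 2 then 2 else 1) ?G \<noteq> 0"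
    using two_power_ne_1[OF assms] by (simp add: gen_def)
  then show "?G ^ 2 \<noteq> 0"
    by auto
  have "4 * n + 4 = 2 * (2 * n + 2)"
    by simp
  then show "homogeneous (4 * n + 4) (?G ^ 2)"
    using homogeneous_power[OF homogeneous_gen, where k = 2] by metis
qed

lemma symbolic_square_degree_ge:
  assumes n: "n \<ge> 2" and f: "f \<in> symbolic_power (gens_ideal n) 2" "f \<noteq> 0"
    and hom: "homogeneous d f"
  shows "4 * n + 2 \<le> d"
proof (rule ccontr)
  assume "\<not> 4 * n + 2 \<le> d"
  then have "d < 2 * (2 * n + 1)"
    by simp
  then have "5 * n \<le> d"
    using n vanishes_on_hyperplanes[OF _ _ f(1) hom]
    by (intro degree_ge_if_vanishes_on_hyperplanes[OF _ f(2) hom]) auto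
  then show False
    using \<open>\<not> 4 * n + 2 \<le> d\<close> n by simp
qed

theorem proposition3p5:
  fixes n :: nat
  assumes "n \<ge> 3"
  defines "x \<equiv> Var 0" and "y \<equiv> Var 1" and "z \<equiv> Var 2" and "w \<equiv> Var 3"
  defines "I \<equiv> ideal_gen
     {(x^n - y^n) * (z^n - w^n) * x * y, (x^n - y^n) * (z^n - w^n) * z * w,
      (x^n - z^n) * (y^n - w^n) * x * z, (x^n - z^n) * (y^n - w^n) * y * w,
      (x^n - w^n) * (y^n - z^n) * x * w, (x^n - w^n) * (y^n - z^n) * y * z}"
  shows "4 * n + 2 \<le> alpha (symbolic_power I 2) \<and> alpha (symbolic_power I 2) \<le> 4 * n + 4"
proof -
  have I: "I = gens_ideal n"
    by (simp add: I_def x_def y_def z_def w_def gens_def gen_def mult_ac)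
  have "n \<ge> 1" "n \<ge> 2"
    using assms by auto
  note witness = gen_square_witness[OF \<open>n \<ge> 1\<close>]
  show ?thesis
    unfolding I
    using alpha_le[OF witness] le_alpha[OF witness symbolic_square_degree_ge[OF \<open>n \<ge> 2\<close>]]
    by simp
qed

end
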